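(* Let $T$ be the Lr $(\mathbf a,\tau)$ interval exchange transformation and assume $T$ has no periodic points. Then: (i) if $x\ne y$ in $[0,1)$, the pair $\mathcal I(x),\mathcal I(y)$ is neither positively nor negatively asymptotic; (ii) if $x\ne y$ in $(0,1]$, the pair $\tilde{\mathcal I}(x),\tilde{\mathcal I}(y)$ is neither positively nor negatively asymptotic; (iii) if $\alpha\ne\beta$ are points of $X$ with $\alpha\in X_0$, the pair $\alpha,\beta$ is neither positively nor negatively asymptotic; (iv) the maps $\mathcal I$ and $\tilde{\mathcal I}$ are injective.
   Context: Fix $n\ge 2$, $[n]=\{1,\dots,n\}$, a vector $\mathbf a=(a_1,\dots,a_n)$ with all $a_i>0$ and $\sum_i a_i=1$, and a permutation $\tau$ of $[n]$. Put $b_0=0$, $b_i=\sum_{j=1}^i a_j$, $J_i=[b_{i-1},b_i)$, $\tilde J_i=(b_{i-1},b_i]$ for $i\in[n]$, and $D=\{b_1,\dots,b_{n-1}\}$. Put $b^\tau_0=0$, $b^\tau_i=\sum_{j=1}^i a_{\tau^{-1}(j)}$. The Lr $(\mathbf a,\tau)$ interval exchange transformation $T:[0,1)\to[0,1)$ and its dual $\tilde T:(0,1]\to(0,1]$ are defined by $x\mapsto x-b_{i-1}+b^\tau_{\tau(i)-1}$ for $x\in J_i$ (resp. $x\in\tilde J_i$); both are bijections. Let $\Omega=[n]^{\mathbb Z}$ with the product topology and shift $S(\alpha)_i=\alpha_{i+1}$. The itinerary maps are $\mathcal I(x)_k=i\iff T^kx\in J_i$ ($x\in[0,1)$) and $\tilde{\mathcal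 I}(x)_k=i\iff\tilde T^kx\in\tilde J_i$ ($x\in(0,1]$), $k\in\mathbb Z$. Let $D_\infty=\{0,1\}\cup\bigcup_{k\in\mathbb Z}T^k(D)$, $R=[0,1]\setminus D_\infty$, $X_0=\mathcal I(R)$, $X=\overline{X_0}$. Points $\alpha,\beta\in\Omega$ are positively (resp. negatively) asymptotic if there is $N\in\mathbb N$ with $\alpha_i=\beta_i$ for all $i\ge N$ (resp. all $i\le -N$). A periodic point of $T$ is $x$ with $T^kx=x$ for some $k\in\mathbb N$. *)

theory Defs
  imports "HOL-Analysis.Analysis"
begin

text \<open>Lr (a,tau) interval exchange transformations. Indices run over {1..n};
  a :: nat => real is the length vector (a i for i in {1..n}), tau :: nat => nat
  a permutation of {1..n}.\<close>

definition iet_b :: "(nat \<Rightarrow> real) \<Rightarrow> nat \<Rightarrow> real" where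
  "iet_b a i = (\<Sum>j=1..i. a j)"

definition iet_btau :: "nat \<Rightarrow> (nat \<Rightarrow> real) \<Rightarrow> (nat \<Rightarrow> nat) \<Rightarrow> nat \<Rightarrow> real" where
  "iet_btau n a \<tau> i = (\<Sum>j=1..i. a (inv_into {1..n} \<tau> j))"

definition iet_J :: "(nat \<Rightarrow> real) \<Rightarrow> nat \<Rightarrow> real set" where
  "iet_J a i = {iet_b a (i - 1) ..< iet_b a i}"

definition iet_Jd :: "(nat \<Rightarrow> real) \<Rightarrow> nat \<Rightarrow> real set" where
  "iet_Jd a i = {iet_b a (i - 1) <.. iet_b a i}"

definition iet_idx :: "nat \<Rightarrow> (nat \<Rightarrow> real) \<Rightarrow> real \<Rightarrow> nat" where
  "iet_idx n a x = (THE i. i \<in> {1..n} \<and> x \<in> iet_J a i)"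

definition iet_idxd :: "nat \<Rightarrow> (nat \<Rightarrow> real) \<Rightarrow> real \<Rightarrow> nat" where
  "iet_idxd n a x = (THE i. i \<in> {1..n} \<and> x \<in> iet_Jd a i)"

definition iet_T :: "nat \<Rightarrow> (nat \<Rightarrow> real) \<Rightarrow> (nat \<Rightarrow> nat) \<Rightarrow> real \<Rightarrow> real" where
  "iet_T n a \<tau> x = (let i = iet_idx n a x in
      x - iet_b a (i - 1) + iet_btau n a \<tau> (\<tau> i - 1))"

definition iet_Td :: "nat \<Rightarrow> (nat \<Rightarrow> real) \<Rightarrow> (nat \<Rightarrow> nat) \<Rightarrow> real \<Rightarrow> real" where
  "iet_Td n a \<tau> x = (let i = iet_idxd n a x in
      x - iet_b a (i - 1) + iet_btau n a \<tau> (\<tau> i - 1))"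

definition iter_int :: "('a \<Rightarrow> 'a) \<Rightarrow> 'a set \<Rightarrow> int \<Rightarrow> 'a \<Rightarrow> 'a" where
  "iter_int f A k x = (if 0 \<le> k then (f ^^ nat k) x else (inv_into A f ^^ nat (- k)) x)"

definition iet_itin :: "nat \<Rightarrow> (nat \<Rightarrow> real) \<Rightarrow> (nat \<Rightarrow> nat) \<Rightarrow> real \<Rightarrow> int \<Rightarrow> nat" where
  "iet_itin n a \<tau> x k = iet_idx n a (iter_int (iet_T n a \<tau>) {0..<1} k x)"

definition iet_itind :: "nat \<Rightarrow> (nat \<Rightarrow> real) \<Rightarrow> (nat \<Rightarrow> nat) \<Rightarrow> real \<Rightarrow> int \<Rightarrow> nat" where
  "iet_itind n a \<tau> x k = iet_idxd n a (iter_int (iet_Td n a \<tau>) {0<..1} k x)"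

text \<open>D = {b_1,...,b_{n-1}}, D_infty, R, X_0 and X (closure in the product
  topology of the discrete space nat, i.e. of Omega).\<close>
definition iet_D :: "nat \<Rightarrow> (nat \<Rightarrow> real) \<Rightarrow> real set" where
  "iet_D n a = iet_b a ` {1..n-1}"

definition iet_Dinf :: "nat \<Rightarrow> (nat \<Rightarrow> real) \<Rightarrow> (nat \<Rightarrow> nat) \<Rightarrow> real set" where
  "iet_Dinf n a \<tau> = {0, 1} \<union> (\<Union>k::int. iter_int (iet_T n a \<tau>) {0..<1} k ` iet_D n a)"

definition iet_R :: "nat \<Rightarrow> (nat \<Rightarrow> real) \<Rightarrow> (nat \<Rightarrow> nat) \<Rightarrow> real set" where
  "iet_R n a \<tau> = {0..1} - iet_Dinf n a \<tau>"

definition iet_X0 :: "nat \<Rightarrow> (nat \<Rightarrow> real) \<Rightarrow> (nat \<Rightarrow> nat) \<Rightarrow> (int \<Rightarrow> nat) set" where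
  "iet_X0 n a \<tau> = iet_itin n a \<tau> ` iet_R n a \<tau>"

definition iet_X :: "nat \<Rightarrow> (nat \<Rightarrow> real) \<Rightarrow> (nat \<Rightarrow> nat) \<Rightarrow> (int \<Rightarrow> nat) set" where
  "iet_X n a \<tau> = closure (iet_X0 n a \<tau>)"

definition pos_asymptotic :: "(int \<Rightarrow> nat) \<Rightarrow> (int \<Rightarrow> nat) \<Rightarrow> bool" where
  "pos_asymptotic \<alpha> \<beta> \<longleftrightarrow> (\<exists>N::nat. \<forall>i. int N \<le> i \<longrightarrow> \<alpha> i = \<beta> i)"

definition neg_asymptotic :: "(int \<Rightarrow> nat) \<Rightarrow> (int \<Rightarrow> nat) \<Rightarrow> bool" where
  "neg_asymptotic \<alpha> \<beta> \<longleftrightarrow> (\<exists>N::nat. \<forall>i. i \<le> - int N \<longrightarrow> \<alpha> i = \<beta> i)"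

definition has_periodic_point :: "(real \<Rightarrow> real) \<Rightarrow> bool" where
  "has_periodic_point T \<longleftrightarrow> (\<exists>x\<in>{0..<1}. \<exists>k::nat. k \<ge> 1 \<and> (T ^^ k) x = x)"

end

theory Submission
  imports Defs
begin

text \<open>If two distinct points had the same forward itinerary, every iterate of T would act on the
  interval between them as a single translation. The translated copies of that interval all lie
  in [0, 1], so two of them overlap; injectivity then makes some power of T a small translation of
  the interval into itself, which forces a periodic point. Backward itineraries are the forward
  itineraries of the inverse map, which is again a piecewise translation, and a periodic orbit of
  the dual map yields one of T just to its left.
  For a point of X_0 with itinerary alpha and a different limit beta of such itineraries agreeing
  with alpha from time m on, take approximating orbits agreeing with beta on ever longer windows
  starting just before m. At time m they agree with the orbit of x for arbitrarily many steps, while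
  one step earlier they lie in different cells; so a discontinuity of the inverse map separates
  them from the orbit of x, which never hits such a point. Their distance is therefore bounded
  below, and again an interval moves rigidly forever.\<close>

section \<open>Rigid motions of an interval\<close>

definition has_periodic_point_in :: "('a \<Rightarrow> 'a) \<Rightarrow> 'a set \<Rightarrow> bool" where
  "has_periodic_point_in f A \<longleftrightarrow> (\<exists>x\<in>A. \<exists>k\<ge>1. (f ^^ k) x = x)"

lemma pigeonhole_close_pair:
  fixes p :: "nat \<Rightarrow> real"
  assumes p: "\<And>k. p k \<in> {0..1}" and L: "L > 0"
  shows "\<exists>j k. j < k \<and> \<bar>p k - p j\<bar> < L"
proof -
  define B where "B = nat \<lfloor>1 / L\<rfloor>"
  define h where "h k = nat \<lfloor>p k / L\<rfloor>" for k
  have "h ` {0..B+1} \<subseteq> {0..B}"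
  proof -
    have "p k / L \<le> 1 / L" for k using p L by (simp add: divide_right_mono)
    then show ?thesis unfolding h_def B_def by (auto intro!: nat_mono floor_mono)
  qed
  then have "card (h ` {0..B+1}) \<le> card {0..B}" by (intro card_mono) auto
  then have "card (h ` {0..B+1}) < card {0..B+1}" by simp
  then have "\<not> inj_on h {0..B+1}" by (rule pigeonhole)
  then obtain j k where jk: "j < k" "h j = h k"
    unfolding inj_on_def by (metis linorder_neqE_nat)
  have "\<lfloor>p j / L\<rfloor> = \<lfloor>p k / L\<rfloor>"
    using jk(2) p[of j] p[of k] L unfolding h_def by (simp add: nat_eq_iff2)
  then have "\<bar>p k / L - p j / L\<bar> < 1" by linarith
  then have "\<bar>p k - p j\<bar> < L"
    using L by (simp add: diff_divide_distrib[symmetric] abs_divide)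
  with jk(1) show ?thesis by blast
qed

lemma short_return_of_translation:
  fixes f :: "real \<Rightarrow> real"
  assumes bij: "bij_betw f A A" and A: "A \<subseteq> {0..1}"
    and lohi: "lo < hi" "{lo..hi} \<subseteq> A"
    and tr: "\<And>k z. z \<in> {lo..hi} \<Longrightarrow> (f ^^ k) z = z + t k"
  obtains m where "m \<ge> 1" "\<bar>t m\<bar> < hi - lo"
proof -
  have bij_pow: "bij_betw (f ^^ k) A A" for k by (rule bij_betw_funpow[OF bij])
  have lo: "lo \<in> {lo..hi}" "lo \<in> A" using lohi by auto
  have t: "t k = (f ^^ k) lo - lo" for k using tr[OF lo(1)] by simp
  have "(f ^^ k) lo \<in> {0..1}" for k using bij_betw_apply[OF bij_pow lo(2)] A by blast
  then obtain j k where jk: "j < k" "\<bar>(f ^^ k) lo - (f ^^ j) lo\<bar> < hi - lo"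
    using pigeonhole_close_pair[of "\<lambda>k. (f ^^ k) lo" "hi - lo"] lohi by auto
  define s where "s = t k - t j"
  define m where "m = k - j"
  have small: "\<bar>s\<bar> < hi - lo" using jk(2) by (simp add: s_def t)
  obtain u v where uv: "u \<in> {lo..hi}" "v \<in> {lo..hi}" "u - v = s"
  proof (cases "s \<ge> 0")
    case True then show ?thesis using that[of "lo + s" lo] small by auto
  next
    case False then show ?thesis using that[of lo "lo - s"] small by auto
  qed
  have "(f ^^ j) u = (f ^^ k) v" using tr[OF uv(1)] tr[OF uv(2)] uv(3) by (simp add: s_def)
  also have "\<dots> = (f ^^ (j + m)) v" using jk(1) by (simp add: m_def)
  also have "\<dots> = (f ^^ j) ((f ^^ m) v)" by (simp add: funpow_add)
  finally have "(f ^^ j) u = (f ^^ j) ((f ^^ m) v)" .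
  moreover have "u \<in> A" "(f ^^ m) v \<in> A"
    using uv lohi(2) bij_betw_apply[OF bij_pow] by auto
  ultimately have "u = (f ^^ m) v"
    using bij_betw_imp_inj_on[OF bij_pow] by (auto dest: inj_onD)
  then have "t m = s" using tr[OF uv(2)] uv(3) by simp
  moreover have "m \<ge> 1" using jk by (simp add: m_def)
  ultimately show ?thesis using that small by blast
qed

lemma translation_of_multiples:
  fixes f :: "real \<Rightarrow> real"
  assumes tr: "\<And>k z. z \<in> {lo..hi} \<Longrightarrow> (f ^^ k) z = z + t k"
    and w: "w \<in> {lo..hi}" "w + t m \<in> {lo..hi}"
  shows "t (r * m) = real r * t m"
proof (induction r)
  case 0
  show ?case using tr[OF w(1), of 0] by simp
next
  case (Suc r)
  have "w + t (Suc r * m) = (f ^^ (r * m + m)) w" using tr[OF w(1)] by (simp add: add.commute)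
  also have "\<dots> = (f ^^ (r * m)) ((f ^^ m) w)" by (simp add: funpow_add)
  also have "\<dots> = w + t m + t (r * m)" using tr[OF w(1), of m] tr[OF w(2)] by simp
  finally show ?case using Suc by (simp add: algebra_simps)
qed

text \<open>Two translated copies of the interval overlap, so some power of the map translates it by
  less than its length; a nonzero such translation would drift out of [0, 1].\<close>
lemma periodic_point_of_translation_on_interval:
  fixes f :: "real \<Rightarrow> real"
  assumes bij: "bij_betw f A A" and A: "A \<subseteq> {0..1}"
    and lohi: "lo < hi" "{lo..hi} \<subseteq> A"
    and tr: "\<And>k z. z \<in> {lo..hi} \<Longrightarrow> (f ^^ k) z = z + t k"
  shows "has_periodic_point_in f A"
proof (rule ccontr)
  assume aperiodic: "\<not> has_periodic_point_in f A"
  obtain m where m: "m \<ge> 1" "\<bar>t m\<bar> < hi - lo"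
    using short_return_of_translation[OF assms] by blast
  have lo: "lo \<in> {lo..hi}" "lo \<in> A" using lohi by auto
  have t: "t k = (f ^^ k) lo - lo" for k using tr[OF lo(1)] by simp
  have orbit: "(f ^^ k) lo \<in> {0..1}" for k
    using bij_betw_apply[OF bij_betw_funpow[OF bij] lo(2)] A by blast
  have "t m \<noteq> 0"
    using aperiodic m(1) lo(2) t[of m] unfolding has_periodic_point_in_def by auto
  obtain w where w: "w \<in> {lo..hi}" "w + t m \<in> {lo..hi}"
  proof (cases "t m \<ge> 0")
    case True then show ?thesis using that[of lo] m(2) by auto
  next
    case False then show ?thesis using that[of hi] m(2) by auto
  qed
  obtain r where "2 / \<bar>t m\<bar> \<le> real r" using real_arch_simple by blast
  then have far: "2 \<le> real r * \<bar>t m\<bar>" using \<open>t m \<noteq> 0\<close> by (simp add: field_simps)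
  have "real r * \<bar>t m\<bar> = \<bar>t (r * m)\<bar>"
    by (simp only: translation_of_multiples[OF tr w] abs_mult abs_of_nat)
  also have "\<dots> \<le> 1"
    using orbit[of "r * m"] orbit[of 0] unfolding t by (simp add: abs_le_iff)
  finally show False using far by simp
qed

lemma funpow_inv_into_cancel:
  assumes "bij_betw f A A" "x \<in> A"
  shows "(f ^^ k) ((inv_into A f ^^ k) x) = x"
  using assms(2)
proof (induction k arbitrary: x)
  case (Suc k)
  have "(inv_into A f ^^ k) x \<in> A"
    using bij_betw_funpow[OF bij_betw_inv_into[OF assms(1)]] Suc.prems by (rule bij_betw_apply)
  then have "f (inv_into A f ((inv_into A f ^^ k) x)) = (inv_into A f ^^ k) x"
    using assms(1) by (simp add: bij_betw_def f_inv_into_f)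
  then show ?case using Suc by (simp add: funpow_swap1)
qed simp

lemma has_periodic_point_inverse:
  assumes "bij_betw f A A" "has_periodic_point_in (inv_into A f) A"
  shows "has_periodic_point_in f A"
  using assms funpow_inv_into_cancel[OF assms(1)] unfolding has_periodic_point_in_def by metis

section \<open>Integer iterates of a bijection\<close>

context
  fixes f :: "'a \<Rightarrow> 'a" and A :: "'a set"
  assumes bij: "bij_betw f A A"
begin

lemma iter_int_of_nat [simp]: "iter_int f A (int k) x = (f ^^ k) x"
  by (simp add: iter_int_def)

lemma iter_int_neg: "iter_int f A (- int k) x = (inv_into A f ^^ k) x"
  by (cases "k = 0") (auto simp: iter_int_def)

lemma iter_int_in: "x \<in> A \<Longrightarrow> iter_int f A k x \<in> A"
  using bij_betw_apply[OF bij_betw_funpow[OF bij]]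
    bij_betw_apply[OF bij_betw_funpow[OF bij_betw_inv_into[OF bij]]]
  by (simp add: iter_int_def)

lemma iter_int_succ:
  assumes "x \<in> A" shows "iter_int f A (k + 1) x = f (iter_int f A k x)"
proof (cases "0 \<le> k")
  case True
  then have "nat (k + 1) = Suc (nat k)" by simp
  with True show ?thesis by (simp add: iter_int_def)
next
  case False
  define j where "j = nat (- k - 1)"
  have "k = - int (Suc j)" "k + 1 = - int j" using False by (simp_all add: j_def)
  then have "iter_int f A k x = inv_into A f (iter_int f A (k + 1) x)"
    by (simp only: iter_int_neg funpow.simps(2) comp_apply)
  moreover have "iter_int f A (k + 1) x \<in> A" using assms by (rule iter_int_in)
  ultimately show ?thesis by (simp add: bij_betw_inv_into_right[OF bij])
qed

lemma iter_int_add: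
  assumes "x \<in> A" shows "iter_int f A (i + j) x = iter_int f A i (iter_int f A j x)"
proof (induction i rule: int_induct[where k = 0])
  case base
  show ?case by (simp add: iter_int_def)
next
  case (step1 i)
  have "iter_int f A (i + 1 + j) x = f (iter_int f A (i + j) x)"
    using iter_int_succ[OF assms, of "i + j"] by (simp add: ac_simps)
  also have "\<dots> = iter_int f A (i + 1) (iter_int f A j x)"
    using step1 iter_int_succ[OF iter_int_in[OF assms]] by simp
  finally show ?case .
next
  case (step2 i)
  have "f (iter_int f A (i - 1 + j) x) = iter_int f A (i + j) x"
    using iter_int_succ[OF assms, of "i - 1 + j"] by (simp add: ac_simps)
  also have "\<dots> = f (iter_int f A (i - 1) (iter_int f A j x))"
    using step2 iter_int_succ[OF iter_int_in[OF assms], of "i - 1"] by simp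
  finally show ?case
    using bij_betw_imp_inj_on[OF bij] iter_int_in assms by (auto dest: inj_onD)
qed

lemma iter_int_cancel: "x \<in> A \<Longrightarrow> iter_int f A (- k) (iter_int f A k x) = x"
  using iter_int_add[of x "- k" k] by (simp add: iter_int_def)

lemma iter_int_inj: "x \<in> A \<Longrightarrow> y \<in> A \<Longrightarrow> iter_int f A k x = iter_int f A k y \<Longrightarrow> x = y"
  by (metis iter_int_cancel)

end

section \<open>Asymptotic sequences\<close>

lemma last_disagreement:
  fixes \<alpha> \<beta> :: "int \<Rightarrow> nat"
  assumes "\<alpha> \<noteq> \<beta>" "pos_asymptotic \<alpha> \<beta>"
  obtains m where "\<alpha> m \<noteq> \<beta> m" "\<And>i. m < i \<Longrightarrow> \<alpha> i = \<beta> i"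
proof -
  obtain N where "\<forall>i. int N \<le> i \<longrightarrow> \<alpha> i = \<beta> i"
    using assms(2) unfolding pos_asymptotic_def by blast
  then have N: "i < int N" if "\<alpha> i \<noteq> \<beta> i" for i using that not_le by blast
  obtain i0 where i0: "\<alpha> i0 \<noteq> \<beta> i0" using assms(1) by blast
  define S where "S = {i0..int N} \<inter> {i. \<alpha> i \<noteq> \<beta> i}"
  have S: "finite S" "i0 \<in> S" using i0 N[OF i0] by (auto simp: S_def)
  show ?thesis
  proof
    have "Max S \<in> S" using S by (intro Max_in) auto
    then show "\<alpha> (Max S) \<noteq> \<beta> (Max S)" unfolding S_def by blast
    show "\<alpha> i = \<beta> i" if "Max S < i" for i
    proof (rule ccontr)
      assume "\<alpha> i \<noteq> \<beta> i"
      moreover have "i0 \<le> i" using Max_ge[OF S] that by linarith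
      ultimately have "i \<in> S" using N by (auto simp: S_def less_imp_le)
      then show False using Max_ge[OF S(1), of i] that by linarith
    qed
  qed
qed

lemma neg_asymptotic_reflect:
  "neg_asymptotic \<alpha> \<beta> \<longleftrightarrow> pos_asymptotic (\<alpha> \<circ> uminus) (\<beta> \<circ> uminus)"
proof -
  have "(\<forall>i. i \<le> - int N \<longrightarrow> \<alpha> i = \<beta> i) \<longleftrightarrow> (\<forall>i. int N \<le> i \<longrightarrow> \<alpha> (- i) = \<beta> (- i))" for N
  proof safe
    fix i assume "\<forall>i. i \<le> - int N \<longrightarrow> \<alpha> i = \<beta> i" "int N \<le> i"
    then show "\<alpha> (- i) = \<beta> (- i)" by simp
  next
    fix i assume "\<forall>i. int N \<le> i \<longrightarrow> \<alpha> (- i) = \<beta> (- i)" "i \<le> - int N"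
    then show "\<alpha> i = \<beta> i" by (metis minus_le_iff minus_minus)
  qed
  then show ?thesis unfolding neg_asymptotic_def pos_asymptotic_def by simp
qed

lemma first_disagreement:
  fixes \<alpha> \<beta> :: "int \<Rightarrow> nat"
  assumes "\<alpha> \<noteq> \<beta>" "neg_asymptotic \<alpha> \<beta>"
  obtains m where "\<alpha> m \<noteq> \<beta> m" "\<And>i. i < m \<Longrightarrow> \<alpha> i = \<beta> i"
proof -
  obtain i where "\<alpha> i \<noteq> \<beta> i" using assms(1) by blast
  then have "(\<alpha> \<circ> uminus) (- i) \<noteq> (\<beta> \<circ> uminus) (- i)" by simp
  then have "\<alpha> \<circ> uminus \<noteq> \<beta> \<circ> uminus" by metis
  with assms(2) obtain m where m: "\<alpha> (- m) \<noteq> \<beta> (- m)" "\<And>i. m < i \<Longrightarrow> \<alpha> (- i) = \<beta> (- i)"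
    unfolding neg_asymptotic_reflect by (auto elim: last_disagreement)
  show ?thesis
  proof (rule that[OF m(1)])
    show "\<alpha> i = \<beta> i" if "i < - m" for i using m(2)[of "- i"] that by simp
  qed
qed

lemma pos_asymptotic_refl: "pos_asymptotic \<alpha> \<alpha>"
  unfolding pos_asymptotic_def by blast

lemma closure_agrees_on_finite:
  fixes \<beta> :: "'i \<Rightarrow> 'a::discrete_topology"
  assumes "\<beta> \<in> closure S" "finite I"
  shows "\<exists>\<gamma>\<in>S. \<forall>i\<in>I. \<gamma> i = \<beta> i"
proof -
  define U where "U = (\<Inter>i\<in>I. (\<lambda>\<gamma>. \<gamma> i) -` {\<beta> i})"
  have "open U" unfolding U_def
    by (intro open_INT assms(2) ballI open_vimage continuous_on_product_coordinates open_discrete)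
  moreover have "\<beta> \<in> U" by (simp add: U_def)
  ultimately have "U \<inter> S \<noteq> {}" using assms(1) open_Int_closure_eq_empty by blast
  then show ?thesis by (auto simp: U_def)
qed

section \<open>Piecewise translations\<close>

locale piecewise_translation =
  fixes A :: "real set" and f :: "real \<Rightarrow> real" and cell :: "real \<Rightarrow> nat"
  assumes bij: "bij_betw f A A"
    and bounded: "A \<subseteq> {0..1}"
    and convex_cell: "\<And>i. convex {x \<in> A. cell x = i}"
    and translation: "\<And>x y. x \<in> A \<Longrightarrow> y \<in> A \<Longrightarrow> cell x = cell y \<Longrightarrow> f x - x = f y - y"
begin

lemma funpow_in: "x \<in> A \<Longrightarrow> (f ^^ k) x \<in> A"
  using bij_betw_funpow[OF bij] by (rule bij_betw_apply)

lemma segment_in_cell: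
  assumes "x \<in> A" "y \<in> A" "cell x = cell y" "z \<in> closed_segment x y"
  shows "z \<in> A \<and> cell z = cell x"
  using convex_cell[of "cell x"] assms by (auto simp: convex_contains_segment)

text \<open>Cells are convex, so at each step the whole segment between u and v lies in one cell.\<close>
lemma translation_along_itinerary:
  assumes "u \<in> A" "v \<in> A" "\<And>k. k < K \<Longrightarrow> cell ((f ^^ k) u) = cell ((f ^^ k) v)"
    and "k \<le> K" "z \<in> closed_segment u v"
  shows "(f ^^ k) z = z + ((f ^^ k) u - u)"
  using assms(4,5)
proof (induction k arbitrary: z)
  case (Suc k)
  define d where "d = (f ^^ k) u - u"
  have z: "(f ^^ k) z = d + z" and v: "(f ^^ k) v = d + v"
    using Suc.IH[of z] Suc.IH[of v] Suc.prems by (simp_all add: d_def)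
  have u: "(f ^^ k) u = d + u" by (simp add: d_def)
  have seg: "(f ^^ k) z \<in> closed_segment ((f ^^ k) u) ((f ^^ k) v)"
    unfolding z v u using Suc.prems(2) by (rule closed_segment_translation_eq[THEN iffD2])
  have "cell ((f ^^ k) u) = cell ((f ^^ k) v)" using assms(3) Suc.prems(1) by simp
  then have "(f ^^ k) z \<in> A \<and> cell ((f ^^ k) z) = cell ((f ^^ k) u)"
    using segment_in_cell[OF funpow_in[OF assms(1)] funpow_in[OF assms(2)] _ seg] by blast
  then have "f ((f ^^ k) z) - (f ^^ k) z = f ((f ^^ k) u) - (f ^^ k) u"
    using translation funpow_in[OF assms(1)] by blast
  then show ?case using z by (simp add: d_def)
qed simp

lemma periodic_point_of_equal_itineraries:
  assumes "u \<in> A" "v \<in> A" "u \<noteq> v" "\<And>k. cell ((f ^^ k) u) = cell ((f ^^ k) v)"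
  shows "has_periodic_point_in f A"
proof (rule periodic_point_of_translation_on_interval[OF bij bounded])
  show "min u v < max u v" using assms(3) by (cases "u \<le> v") simp_all
  have ivl: "{min u v..max u v} = closed_segment u v"
    by (simp add: closed_segment_eq_real_ivl min_def max_def)
  have "cell u = cell v" using assms(4)[of 0] by simp
  then show "{min u v..max u v} \<subseteq> A"
    unfolding ivl using segment_in_cell[OF assms(1,2)] by blast
  show "(f ^^ k) z = z + ((f ^^ k) u - u)" if "z \<in> {min u v..max u v}" for k z
    by (rule translation_along_itinerary[OF assms(1,2), where K = k])
      (use assms(4) that ivl in simp_all)
qed

lemma periodic_point_of_covering_partners:
  assumes p: "p \<in> A" and q: "\<And>K. q K \<in> A"
    and agree: "\<And>K k. k \<le> K \<Longrightarrow> cell ((f ^^ k) p) = cell ((f ^^ k) (q K))"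
    and "lo < hi" and covered: "\<And>K. \<exists>K'\<ge>K. {lo..hi} \<subseteq> closed_segment p (q K')"
  shows "has_periodic_point_in f A"
proof (rule periodic_point_of_translation_on_interval[OF bij bounded \<open>lo < hi\<close>])
  obtain K where "{lo..hi} \<subseteq> closed_segment p (q K)" using covered[of 0] by blast
  moreover have "cell p = cell (q K)" using agree[of 0 K] by simp
  ultimately show "{lo..hi} \<subseteq> A" using segment_in_cell[OF p q] by blast
  show "(f ^^ k) z = z + ((f ^^ k) p - p)" if "z \<in> {lo..hi}" for k z
  proof -
    obtain K where K: "k \<le> K" "{lo..hi} \<subseteq> closed_segment p (q K)"
      using covered[of k] by blast
    have "cell ((f ^^ k') p) = cell ((f ^^ k') (q K))" if "k' < Suc K" for k'
      using agree[of k' K] that by simp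
    then show ?thesis
      by (rule translation_along_itinerary[OF p q])
        (use K subsetD[OF K(2) that] in simp_all)
  qed
qed

text \<open>The partners q stay at distance at least the distance from p to D, and infinitely often on
  the same side of p; the interval of that length on that side then moves rigidly forever.\<close>
lemma periodic_point_of_separated_agreements:
  assumes p: "p \<in> A" "finite D" "p \<notin> D"
    and partners: "\<And>K. \<exists>q\<in>A. (\<exists>d\<in>D. d \<in> closed_segment p q) \<and>
                                (\<forall>k\<le>K. cell ((f ^^ k) p) = cell ((f ^^ k) q))"
  shows "has_periodic_point_in f A"
proof -
  have "\<exists>q. \<forall>K. q K \<in> A \<and> (\<exists>d\<in>D. d \<in> closed_segment p (q K)) \<and>
                 (\<forall>k\<le>K. cell ((f ^^ k) p) = cell ((f ^^ k) (q K)))"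
    using partners by (intro choice) blast
  then obtain q where q: "\<And>K. q K \<in> A" "\<And>K. \<exists>d\<in>D. d \<in> closed_segment p (q K)"
    and agree: "\<And>K k. k \<le> K \<Longrightarrow> cell ((f ^^ k) p) = cell ((f ^^ k) (q K))"
    by blast
  have periodic: "has_periodic_point_in f A"
    if "lo < hi" "\<And>K. \<exists>K'\<ge>K. {lo..hi} \<subseteq> closed_segment p (q K')" for lo hi
    using periodic_point_of_covering_partners[of p q lo hi, OF p(1) q(1) agree that] .
  define \<delta> where "\<delta> = Min ((\<lambda>d. \<bar>p - d\<bar>) ` D)"
  have "D \<noteq> {}" using q(2)[of 0] by blast
  then have "\<delta> > 0" using p unfolding \<delta>_def by auto
  have far: "\<delta> \<le> \<bar>p - q K\<bar>" for K
  proof -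
    obtain d where "d \<in> D" "d \<in> closed_segment p (q K)" using q(2) by blast
    then have "\<delta> \<le> \<bar>p - d\<bar>" "\<bar>p - d\<bar> \<le> \<bar>p - q K\<bar>"
      using p(2) by (auto simp: \<delta>_def closed_segment_eq_real_ivl split: if_splits)
    then show ?thesis by linarith
  qed
  show ?thesis
  proof (cases "\<forall>K. \<exists>K'\<ge>K. p + \<delta> \<le> q K'")
    case True
    have "\<exists>K'\<ge>K. {p..p + \<delta>} \<subseteq> closed_segment p (q K')" for K
    proof -
      obtain K' where "K' \<ge> K" "p + \<delta> \<le> q K'" using True by blast
      then show ?thesis using \<open>\<delta> > 0\<close> by (auto simp: closed_segment_eq_real_ivl)
    qed
    with \<open>\<delta> > 0\<close> show ?thesis by (intro periodic[of p "p + \<delta>"]) auto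
  next
    case False
    then obtain K0 where "\<forall>K'\<ge>K0. \<not> p + \<delta> \<le> q K'" by blast
    then have left: "q K' \<le> p - \<delta>" if "K' \<ge> K0" for K'
      using that far[of K'] by (auto simp: not_le abs_if split: if_splits)
    have "\<exists>K'\<ge>K. {p - \<delta>..p} \<subseteq> closed_segment p (q K')" for K
      using left[of "max K K0"] \<open>\<delta> > 0\<close>
      by (intro exI[of _ "max K K0"]) (auto simp: closed_segment_eq_real_ivl)
    with \<open>\<delta> > 0\<close> show ?thesis by (intro periodic[of "p - \<delta>" p]) auto
  qed
qed

lemma inverse_piecewise_translation: "piecewise_translation A (inv_into A f) (cell \<circ> inv_into A f)"
proof
  let ?g = "inv_into A f"
  have g: "?g x \<in> A" "f (?g x) = x" if "x \<in> A" for x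
    using bij that by (auto simp: bij_betw_inv_into_right bij_betw_apply[OF bij_betw_inv_into])
  show "bij_betw ?g A A" using bij by (rule bij_betw_inv_into)
  show "A \<subseteq> {0..1}" by (rule bounded)
  show "convex {x \<in> A. (cell \<circ> ?g) x = i}" for i
  proof (cases "\<exists>y\<in>A. cell y = i")
    case True
    then obtain y0 where y0: "y0 \<in> A" "cell y0 = i" by blast
    have "{x \<in> A. cell (?g x) = i} = (+) (f y0 - y0) ` {y \<in> A. cell y = i}"
    proof (intro equalityI subsetI)
      fix x assume x: "x \<in> {x \<in> A. cell (?g x) = i}"
      then have "x = (f y0 - y0) + ?g x" using translation[of "?g x" y0] g y0 by force
      then show "x \<in> (+) (f y0 - y0) ` {y \<in> A. cell y = i}" using g x by blast
    next
      fix x assume "x \<in> (+) (f y0 - y0) ` {y \<in> A. cell y = i}"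
      then obtain y where y: "y \<in> A" "cell y = i" "x = (f y0 - y0) + y" by blast
      then have "x = f y" using translation[of y y0] y0 by simp
      then show "x \<in> {x \<in> A. cell (?g x) = i}"
        using y bij bij_betw_inv_into_left[OF bij] by (simp add: bij_betw_apply)
    qed
    then show ?thesis using convex_cell[of i] by (simp add: convex_translation)
  next
    case False
    then have "{x \<in> A. (cell \<circ> ?g) x = i} = {}" using g by auto
    then show ?thesis by (metis convex_empty)
  qed
  show "?g x - x = ?g y - y" if "x \<in> A" "y \<in> A" "(cell \<circ> ?g) x = (cell \<circ> ?g) y" for x y
    using translation[of "?g x" "?g y"] g that by simp
qed

definition itinerary :: "real \<Rightarrow> int \<Rightarrow> nat" where
  "itinerary x k = cell (iter_int f A k x)"

lemma itinerary_forward: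
  assumes "x \<in> A" shows "cell ((f ^^ k) (iter_int f A m x)) = itinerary x (int k + m)"
  unfolding itinerary_def iter_int_add[OF bij assms] iter_int_of_nat[OF bij] ..

lemma itinerary_backward:
  assumes "x \<in> A" shows "cell ((inv_into A f ^^ k) (iter_int f A m x)) = itinerary x (- int k + m)"
  unfolding itinerary_def iter_int_add[OF bij assms] iter_int_neg[OF bij] ..

lemma itineraries_not_pos_asymptotic:
  assumes aperiodic: "\<not> has_periodic_point_in f A" and xy: "x \<in> A" "y \<in> A" "x \<noteq> y"
  shows "\<not> pos_asymptotic (itinerary x) (itinerary y)"
proof
  assume "pos_asymptotic (itinerary x) (itinerary y)"
  then obtain N where N: "\<And>i. int N \<le> i \<Longrightarrow> itinerary x i = itinerary y i"
    unfolding pos_asymptotic_def by blast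
  have "has_periodic_point_in f A"
  proof (rule periodic_point_of_equal_itineraries)
    show "iter_int f A N x \<in> A" "iter_int f A N y \<in> A" using xy iter_int_in[OF bij] by auto
    show "iter_int f A N x \<noteq> iter_int f A N y" using xy iter_int_inj[OF bij] by blast
    show "cell ((f ^^ k) (iter_int f A N x)) = cell ((f ^^ k) (iter_int f A N y))" for k
      using N[of "int k + int N"] by (simp add: itinerary_forward xy)
  qed
  with aperiodic show False ..
qed

lemma itineraries_not_neg_asymptotic:
  assumes aperiodic: "\<not> has_periodic_point_in f A" and xy: "x \<in> A" "y \<in> A" "x \<noteq> y"
  shows "\<not> neg_asymptotic (itinerary x) (itinerary y)"
proof
  let ?g = "inv_into A f"
  interpret inv: piecewise_translation A ?g "cell \<circ> ?g" by (rule inverse_piecewise_translation)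
  assume "neg_asymptotic (itinerary x) (itinerary y)"
  then obtain N where N: "\<And>i. i \<le> - int N \<Longrightarrow> itinerary x i = itinerary y i"
    unfolding neg_asymptotic_def by blast
  have "has_periodic_point_in ?g A"
  proof (rule inv.periodic_point_of_equal_itineraries)
    show "iter_int f A (- N) x \<in> A" "iter_int f A (- N) y \<in> A"
      using xy iter_int_in[OF bij] by auto
    show "iter_int f A (- N) x \<noteq> iter_int f A (- N) y" using xy iter_int_inj[OF bij] by blast
    show "(cell \<circ> ?g) ((?g ^^ k) (iter_int f A (- N) x)) =
          (cell \<circ> ?g) ((?g ^^ k) (iter_int f A (- N) y))" for k
      using N[of "- int (Suc k) + - int N"] itinerary_backward[OF xy(1), of "Suc k" "- int N"]
        itinerary_backward[OF xy(2), of "Suc k" "- int N"]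
      by simp
  qed
  with aperiodic has_periodic_point_inverse[OF bij] show False by blast
qed

end

section \<open>Interval exchange transformations\<close>

definition half_open :: "bool \<Rightarrow> real \<Rightarrow> real \<Rightarrow> real set" where
  "half_open left_closed lo hi = (if left_closed then {lo..<hi} else {lo<..hi})"

lemma half_open_empty [simp]: "half_open s lo lo = {}"
  by (simp add: half_open_def)

locale interval_partition =
  fixes n :: nat and c :: "nat \<Rightarrow> real"
  assumes strict_step: "\<And>i. i < n \<Longrightarrow> c i < c (Suc i)"
    and start: "c 0 = 0" and finish: "c n = 1"
begin

lemma strict_mono_upto: "j \<le> n \<Longrightarrow> i < j \<Longrightarrow> c i < c j"
proof (induction j)
  case (Suc j)
  then show ?case using strict_step[of j] by (cases "i = j") (auto simp: less_Suc_eq)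
qed simp

lemma mono_upto: "j \<le> n \<Longrightarrow> i \<le> j \<Longrightarrow> c i \<le> c j"
  using strict_mono_upto by (cases "i = j") (auto simp: order_le_less)

lemma cell_exists:
  assumes "x \<in> half_open s 0 1"
  obtains i where "i \<in> {1..n}" "x \<in> half_open s (c (i - 1)) (c i)"
proof -
  define i where "i = (LEAST i. x \<in> half_open s 0 (c i))"
  have "x \<in> half_open s 0 (c n)" using assms finish by simp
  then have i: "x \<in> half_open s 0 (c i)" "i \<le> n"
    unfolding i_def by (auto intro: LeastI Least_le)
  moreover have "i \<noteq> 0"
  proof
    assume "i = 0"
    with i(1) start show False by simp
  qed
  moreover have "x \<notin> half_open s 0 (c (i - 1))"
    using \<open>i \<noteq> 0\<close> not_less_Least[of "i - 1" "\<lambda>i. x \<in> half_open s 0 (c i)"]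
    unfolding i_def by simp
  ultimately show ?thesis
    using that[of i] assms by (cases s) (auto simp: half_open_def)
qed

lemma cell_unique:
  assumes "i \<in> {1..n}" "j \<in> {1..n}"
    "x \<in> half_open s (c (i - 1)) (c i)" "x \<in> half_open s (c (j - 1)) (c j)"
  shows "i = j"
proof (rule ccontr)
  assume "i \<noteq> j"
  then consider "i < j" | "j < i" by linarith
  then show False
  proof cases
    case 1
    then have "c i \<le> c (j - 1)" using assms by (intro mono_upto) auto
    then show False using assms by (cases s) (auto simp: half_open_def)
  next
    case 2
    then have "c j \<le> c (i - 1)" using assms by (intro mono_upto) auto
    then show False using assms by (cases s) (auto simp: half_open_def)
  qed
qed

lemma cell_subset:
  assumes "i \<in> {1..n}" shows "half_open s (c (i - 1)) (c i) \<subseteq> half_open s 0 1"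
proof -
  have "c 0 \<le> c (i - 1)" "c i \<le> c n" using assms by (auto intro!: mono_upto)
  then show ?thesis using start finish by (cases s) (auto simp: half_open_def)
qed

lemma point_between_cells:
  assumes "i \<in> {1..n}" "j \<in> {1..n}" "i \<noteq> j"
    "x \<in> half_open s (c (i - 1)) (c i)" "y \<in> half_open s (c (j - 1)) (c j)"
  shows "\<exists>l\<in>{1..n-1}. c l \<in> closed_segment x y"
proof -
  have between: "c i \<in> closed_segment x y"
    if "i < j" "i \<in> {1..n}" "j \<in> {1..n}"
       "x \<in> half_open s (c (i - 1)) (c i)" "y \<in> half_open s (c (j - 1)) (c j)" for i j x y
  proof -
    have "c i \<le> c (j - 1)" using that by (intro mono_upto) auto
    then show ?thesis using that by (cases s) (auto simp: half_open_def closed_segment_eq_real_ivl)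
  qed
  consider "i < j" | "j < i" using assms(3) by linarith
  then show ?thesis
  proof cases
    case 1
    then show ?thesis using between[OF 1 assms(1,2,4,5)] assms(1,2) by (intro bexI[of _ i]) auto
  next
    case 2
    then show ?thesis using between[OF 2 assms(2,1,5,4)] assms(1,2)
      by (intro bexI[of _ j]) (auto simp: closed_segment_commute)
  qed
qed

end

locale iet =
  fixes n :: nat and a :: "nat \<Rightarrow> real" and \<tau> :: "nat \<Rightarrow> nat"
  assumes lengths_pos: "\<forall>i\<in>{1..n}. a i > 0"
    and lengths_sum: "(\<Sum>i=1..n. a i) = 1"
    and perm: "\<tau> permutes {1..n}"
begin

abbreviation b where "b \<equiv> iet_b a"
abbreviation bt where "bt \<equiv> iet_btau n a \<tau>"

lemma tau_bij: "bij_betw \<tau> {1..n} {1..n}"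
  using perm by (rule permutes_imp_bij)

lemma b_Suc: "b (Suc i) = b i + a (Suc i)"
  by (simp add: iet_b_def)

lemma bt_Suc: "bt (Suc i) = bt i + a (inv_into {1..n} \<tau> (Suc i))"
  by (simp add: iet_btau_def)

sublocale src: interval_partition n b
proof
  show "b i < b (Suc i)" if "i < n" for i using b_Suc[of i] lengths_pos that by auto
qed (use lengths_sum in \<open>simp_all add: iet_b_def\<close>)

sublocale tgt: interval_partition n bt
proof
  have inv: "inv_into {1..n} \<tau> j \<in> {1..n}" if "j \<in> {1..n}" for j
    using bij_betw_inv_into[OF tau_bij] that by (rule bij_betw_apply)
  show "bt i < bt (Suc i)" if "i < n" for i using bt_Suc[of i] lengths_pos inv[of "Suc i"] that by auto
  show "bt 0 = 0" by (simp add: iet_btau_def)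
  have "bt n = (\<Sum>j=1..n. a (inv_into {1..n} \<tau> j))" by (simp add: iet_btau_def)
  also have "\<dots> = 1"
    using sum.reindex_bij_betw[OF bij_betw_inv_into[OF tau_bij], of a] lengths_sum by simp
  finally show "bt n = 1" .
qed

lemma bt_tau: "i \<in> {1..n} \<Longrightarrow> bt (\<tau> i) = bt (\<tau> i - 1) + (b i - b (i - 1))"
proof -
  assume i: "i \<in> {1..n}"
  then have "\<tau> i \<ge> 1" using tau_bij by (auto simp: bij_betw_def)
  then have "bt (\<tau> i) = bt (\<tau> i - 1) + a (inv_into {1..n} \<tau> (\<tau> i))"
    using bt_Suc[of "\<tau> i - 1"] by simp
  moreover have "inv_into {1..n} \<tau> (\<tau> i) = i" using tau_bij i by (simp add: bij_betw_inv_into_left)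
  moreover have "b i = b (i - 1) + a i" using b_Suc[of "i - 1"] i by simp
  ultimately show ?thesis by simp
qed

text \<open>The flag selects the convention: True gives the cells J_i and T on [0, 1), False the cells
  tilde J_i and the dual map on (0, 1].\<close>
definition domain :: "bool \<Rightarrow> real set" where
  "domain s = half_open s 0 1"

definition idx :: "bool \<Rightarrow> real \<Rightarrow> nat" where
  "idx s x = (THE i. i \<in> {1..n} \<and> x \<in> half_open s (b (i - 1)) (b i))"

definition T :: "bool \<Rightarrow> real \<Rightarrow> real" where
  "T s x = x - b (idx s x - 1) + bt (\<tau> (idx s x) - 1)"

lemma idx_eqI: "i \<in> {1..n} \<Longrightarrow> x \<in> half_open s (b (i - 1)) (b i) \<Longrightarrow> idx s x = i"
  unfolding idx_def by (rule the_equality) (auto intro: src.cell_unique)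

lemma idx:
  assumes "x \<in> domain s"
  shows "idx s x \<in> {1..n}" "x \<in> half_open s (b (idx s x - 1)) (b (idx s x))"
proof -
  obtain i where "i \<in> {1..n}" "x \<in> half_open s (b (i - 1)) (b i)"
    using assms src.cell_exists unfolding domain_def by blast
  then show "idx s x \<in> {1..n}" "x \<in> half_open s (b (idx s x - 1)) (b (idx s x))"
    using idx_eqI by auto
qed

lemma T_cell:
  assumes "x \<in> domain s"
  shows "T s x \<in> half_open s (bt (\<tau> (idx s x) - 1)) (bt (\<tau> (idx s x)))"
  using idx[OF assms] bt_tau[OF idx(1)[OF assms]]
  by (cases s) (auto simp: T_def half_open_def)

lemma tau_in: "i \<in> {1..n} \<Longrightarrow> \<tau> i \<in> {1..n}"
  using tau_bij by (rule bij_betw_apply)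

lemma tau_surj: "j \<in> {1..n} \<Longrightarrow> \<exists>i\<in>{1..n}. \<tau> i = j"
  using tau_bij by (metis bij_betw_iff_bijections)

lemma T_bij: "bij_betw (T s) (domain s) (domain s)"
proof (rule bij_betw_imageI)
  show "inj_on (T s) (domain s)"
  proof
    fix x y assume xy: "x \<in> domain s" "y \<in> domain s" "T s x = T s y"
    have "\<tau> (idx s x) = \<tau> (idx s y)"
      using tgt.cell_unique[OF tau_in tau_in T_cell[OF xy(1)]] T_cell[OF xy(2)] idx xy by simp
    then have "idx s x = idx s y" using tau_bij idx xy by (metis bij_betw_inv_into_left)
    then show "x = y" using xy(3) by (simp add: T_def)
  qed
  show "T s ` domain s = domain s"
  proof (intro equalityI subsetI)
    fix y assume "y \<in> T s ` domain s"
    then show "y \<in> domain s"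
      using tgt.cell_subset[OF tau_in[OF idx(1)]] T_cell unfolding domain_def by blast
  next
    fix y assume "y \<in> domain s"
    then obtain l where l: "l \<in> {1..n}" "y \<in> half_open s (bt (l - 1)) (bt l)"
      using tgt.cell_exists unfolding domain_def by blast
    obtain i where i: "i \<in> {1..n}" "\<tau> i = l" using tau_surj[OF l(1)] by blast
    define x where "x = y - bt (\<tau> i - 1) + b (i - 1)"
    have x: "x \<in> half_open s (b (i - 1)) (b i)"
      using l(2) bt_tau[OF i(1)] i(2) unfolding x_def by (cases s) (auto simp: half_open_def)
    then have "idx s x = i" using idx_eqI[OF i(1)] by blast
    moreover have "x \<in> domain s" using src.cell_subset[OF i(1)] x unfolding domain_def by blast
    ultimately show "y \<in> T s ` domain s" by (intro image_eqI[of _ _ x]) (auto simp: T_def x_def)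
  qed
qed

lemma T_piecewise_translation: "piecewise_translation (domain s) (T s) (idx s)"
proof
  show "bij_betw (T s) (domain s) (domain s)" by (rule T_bij)
  show "domain s \<subseteq> {0..1}" by (cases s) (auto simp: domain_def half_open_def)
  show "convex {x \<in> domain s. idx s x = i}" for i
  proof (cases "i \<in> {1..n}")
    case True
    then have "{x \<in> domain s. idx s x = i} = half_open s (b (i - 1)) (b i)"
      using idx idx_eqI src.cell_subset[OF True] unfolding domain_def by blast
    then show ?thesis by (simp add: half_open_def)
  next
    case False
    then have "{x \<in> domain s. idx s x = i} = {}" using idx by blast
    then show ?thesis by (metis convex_empty)
  qed
  show "T s x - x = T s y - y" if "idx s x = idx s y" for x y
    using that by (simp add: T_def)
qed

sublocale fwd: piecewise_translation "domain True" "T True" "idx True"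
  by (rule T_piecewise_translation)

sublocale dual: piecewise_translation "domain False" "T False" "idx False"
  by (rule T_piecewise_translation)

lemma domain_True: "domain True = {0..<1}" and domain_False: "domain False = {0<..1}"
  by (simp_all add: domain_def half_open_def)

lemma iet_idx_eq: "iet_idx n a = idx True" and iet_idxd_eq: "iet_idxd n a = idx False"
  by (simp_all add: fun_eq_iff iet_idx_def iet_idxd_def idx_def iet_J_def iet_Jd_def half_open_def)

lemma iet_T_eq: "iet_T n a \<tau> = T True" and iet_Td_eq: "iet_Td n a \<tau> = T False"
  by (simp_all add: fun_eq_iff iet_T_def iet_Td_def T_def iet_idx_eq iet_idxd_eq Let_def)

lemma iet_itin_eq: "iet_itin n a \<tau> = fwd.itinerary"
  by (simp add: fun_eq_iff iet_itin_def fwd.itinerary_def iet_T_eq iet_idx_eq flip: domain_True)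

lemma iet_itind_eq: "iet_itind n a \<tau> = dual.itinerary"
  by (simp add: fun_eq_iff iet_itind_def dual.itinerary_def iet_Td_eq iet_idxd_eq flip: domain_False)

text \<open>Near a periodic orbit of the dual map, just to its left, the two maps agree: every point
  of that orbit lies in a cell (b(i-1), b(i)], and shifting the orbit slightly to the left moves it
  into the interior of these cells.\<close>
lemma periodic_point_of_dual:
  assumes "has_periodic_point_in (T False) (domain False)"
  shows "has_periodic_point_in (T True) (domain True)"
proof -
  obtain x m where x: "x \<in> domain False" "m \<ge> 1" "(T False ^^ m) x = x"
    using assms unfolding has_periodic_point_in_def by blast
  define orb where "orb k = (T False ^^ k) x" for k
  define gap where "gap k = orb k - b (idx False (orb k) - 1)" for k
  have orb: "orb k \<in> domain False" for k using dual.funpow_in[OF x(1)] by (simp add: orb_def)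
  have gap: "gap k > 0" for k
    using idx(2)[OF orb[of k]] by (simp add: gap_def half_open_def)
  define \<epsilon> where "\<epsilon> = Min (gap ` {..<m}) / 2"
  have "0 \<in> {..<m}" using x(2) by simp
  then have min_pos: "Min (gap ` {..<m}) > 0" using gap by (subst Min_gr_iff) auto
  have min_le: "Min (gap ` {..<m}) \<le> gap k" if "k < m" for k using that by (intro Min_le) auto
  have \<epsilon>_pos: "\<epsilon> > 0" using min_pos by (simp add: \<epsilon>_def)
  have \<epsilon>_lt: "\<epsilon> < gap k" if "k < m" for k
    using min_le[OF that] min_pos by (simp add: \<epsilon>_def)
  have shifted: "(T True ^^ k) (x - \<epsilon>) = orb k - \<epsilon>" if "k \<le> m" for k
    using that
  proof (induction k)
    case (Suc k)
    define i where "i = idx False (orb k)"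
    have "orb k - \<epsilon> \<in> half_open True (b (i - 1)) (b i)"
      using \<epsilon>_pos \<epsilon>_lt[of k] Suc.prems idx(2)[OF orb[of k]] by (simp add: gap_def i_def half_open_def)
    then have "idx True (orb k - \<epsilon>) = i" using idx_eqI idx(1)[OF orb[of k]] i_def by blast
    then have "T True (orb k - \<epsilon>) = T False (orb k) - \<epsilon>" by (simp add: T_def i_def)
    then show ?case using Suc by (simp add: orb_def)
  qed (simp add: orb_def)
  have "x - \<epsilon> \<in> half_open True (b (idx False x - 1)) (b (idx False x))"
    using \<epsilon>_pos \<epsilon>_lt[of 0] x(2) idx(2)[OF x(1)] by (simp add: gap_def orb_def half_open_def)
  then have "x - \<epsilon> \<in> domain True"
    using src.cell_subset[OF idx(1)[OF x(1)]] unfolding domain_def by blast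
  moreover have "(T True ^^ m) (x - \<epsilon>) = x - \<epsilon>" using shifted[of m] x(3) by (simp add: orb_def)
  ultimately show ?thesis using x(2) unfolding has_periodic_point_in_def by blast
qed

abbreviation iter :: "int \<Rightarrow> real \<Rightarrow> real" where
  "iter k \<equiv> iter_int (T True) (domain True) k"

lemma inv_T_iter: "x \<in> domain True \<Longrightarrow> inv_into (domain True) (T True) (iter (k + 1) x) = iter k x"
  using fwd.bij by (simp add: iter_int_succ bij_betw_inv_into_left iter_int_in)

lemma b_between_cells:
  assumes "x \<in> domain s" "y \<in> domain s" "idx s x \<noteq> idx s y"
  shows "\<exists>l\<in>{1..n-1}. b l \<in> closed_segment x y"
  using src.point_between_cells[OF idx(1)[OF assms(1)] idx(1)[OF assms(2)] assms(3)]
    idx(2) assms(1,2) by blast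

lemma bt_between_image_cells:
  assumes "x \<in> domain s" "y \<in> domain s"
    and "idx s (inv_into (domain s) (T s) x) \<noteq> idx s (inv_into (domain s) (T s) y)"
  shows "\<exists>l\<in>{1..n-1}. bt l \<in> closed_segment x y"
proof -
  let ?g = "inv_into (domain s) (T s)"
  have g: "?g z \<in> domain s" "T s (?g z) = z" if "z \<in> domain s" for z
    using bij_betw_apply[OF bij_betw_inv_into[OF T_bij]] bij_betw_inv_into_right[OF T_bij] that
    by auto
  have "\<tau> (idx s (?g x)) \<noteq> \<tau> (idx s (?g y))"
    using assms(3) idx(1) g assms(1,2) tau_bij by (metis bij_betw_inv_into_left)
  then show ?thesis
    using tgt.point_between_cells[OF tau_in tau_in] idx(1) T_cell g assms(1,2) by metis
qed

lemma T_left_endpoint: "i \<in> {1..n} \<Longrightarrow> T True (b (i - 1)) = bt (\<tau> i - 1)"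
  using src.strict_mono_upto[of i "i - 1"] idx_eqI[of i "b (i - 1)" True]
  by (simp add: T_def half_open_def)

lemma R_in_domain: "x \<in> iet_R n a \<tau> \<Longrightarrow> x \<in> domain True"
  by (auto simp: iet_R_def iet_Dinf_def domain_True)

lemma D_in_domain: "d \<in> iet_D n a \<Longrightarrow> d \<in> domain True"
proof -
  assume "d \<in> iet_D n a"
  then obtain l where l: "l \<in> {1..n-1}" "d = b l" by (auto simp: iet_D_def)
  then have "b 0 < b l" "b l < b n" by (auto intro!: src.strict_mono_upto)
  then show ?thesis using l(2) src.start src.finish by (simp add: domain_True)
qed

lemma R_orbit_avoids:
  assumes "x \<in> iet_R n a \<tau>" "d \<in> iet_D n a" shows "iter k x \<noteq> iter j d"
proof
  assume "iter k x = iter j d"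
  moreover have "d \<in> domain True" using assms(2) by (rule D_in_domain)
  ultimately have "x = iter (- k + j) d"
    using iter_int_cancel[OF fwd.bij R_in_domain[OF assms(1)], of k] iter_int_add[OF fwd.bij]
    by metis
  then show False using assms by (auto simp: iet_R_def iet_Dinf_def iet_T_eq domain_True)
qed

text \<open>bt l is the image of the left endpoint of the cell sent to position l + 1; when that
  endpoint is 0, it is itself the image of the left endpoint of the cell sent to position 1.\<close>
lemma bt_in_orbit_of_D:
  assumes "l \<in> {1..n-1}" shows "\<exists>d\<in>iet_D n a. \<exists>j. bt l = iter j d"
proof -
  have "l + 1 \<in> {1..n}" using assms by auto
  then obtain i where i: "i \<in> {1..n}" "\<tau> i = l + 1" using tau_surj by blast
  have Ti: "T True (b (i - 1)) = bt l" using T_left_endpoint[OF i(1)] i(2) by simp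
  show ?thesis
  proof (cases "i = 1")
    case False
    then have "b (i - 1) \<in> iet_D n a" using i(1) unfolding iet_D_def by (intro imageI) auto
    moreover have "bt l = iter 1 (b (i - 1))" using Ti iter_int_of_nat[OF fwd.bij, of 1] by simp
    ultimately show ?thesis by blast
  next
    case True
    have "1 \<in> {1..n}" using assms by auto
    then obtain i' where i': "i' \<in> {1..n}" "\<tau> i' = 1" using tau_surj by blast
    with True i assms have "i' \<noteq> 1" by auto
    then have "b (i' - 1) \<in> iet_D n a" using i'(1) unfolding iet_D_def by (intro imageI) auto
    moreover have "T True (b (i' - 1)) = b (i - 1)"
      using T_left_endpoint[OF i'(1)] i'(2) True src.start tgt.start by simp
    then have "bt l = iter 2 (b (i' - 1))"
      using Ti iter_int_of_nat[OF fwd.bij, of 2] by (simp add: numeral_2_eq_2)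
    ultimately show ?thesis by blast
  qed
qed

lemma R_orbit_avoids_b: "x \<in> iet_R n a \<tau> \<Longrightarrow> l \<in> {1..n-1} \<Longrightarrow> iter k x \<noteq> b l"
  using R_orbit_avoids[of x "b l" k 0] by (auto simp: iet_D_def iter_int_def)

lemma R_orbit_avoids_bt: "x \<in> iet_R n a \<tau> \<Longrightarrow> l \<in> {1..n-1} \<Longrightarrow> iter k x \<noteq> bt l"
  using bt_in_orbit_of_D R_orbit_avoids by metis

lemma closure_X0_agrees_on_finite:
  assumes "\<beta> \<in> iet_X n a \<tau>" "finite I"
  obtains y where "y \<in> iet_R n a \<tau>" "\<And>i. i \<in> I \<Longrightarrow> fwd.itinerary y i = \<beta> i"
  using closure_agrees_on_finite[OF assms(1)[unfolded iet_X_def] assms(2)] that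
  unfolding iet_X0_def iet_itin_eq by blast

lemma X0_not_pos_asymptotic:
  assumes aperiodic: "\<not> has_periodic_point_in (T True) (domain True)"
    and x: "x \<in> iet_R n a \<tau>" and \<beta>: "\<beta> \<in> iet_X n a \<tau>" and ne: "fwd.itinerary x \<noteq> \<beta>"
  shows "\<not> pos_asymptotic (fwd.itinerary x) \<beta>"
proof
  assume "pos_asymptotic (fwd.itinerary x) \<beta>"
  then obtain m where m: "fwd.itinerary x m \<noteq> \<beta> m" "\<And>i. m < i \<Longrightarrow> fwd.itinerary x i = \<beta> i"
    using ne by (auto elim: last_disagreement)
  have xA: "x \<in> domain True" by (rule R_in_domain[OF x])
  define p where "p = iter (m + 1) x"
  have pA: "p \<in> domain True" unfolding p_def by (rule iter_int_in[OF fwd.bij xA])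
  have "has_periodic_point_in (T True) (domain True)"
  proof (rule fwd.periodic_point_of_separated_agreements[OF pA])
    show "finite (bt ` {1..n-1})" by simp
    show "p \<notin> bt ` {1..n-1}" using R_orbit_avoids_bt[OF x] by (auto simp: p_def)
    fix K
    obtain y where y: "y \<in> iet_R n a \<tau>" "\<And>i. i \<in> {m..m + 1 + int K} \<Longrightarrow> fwd.itinerary y i = \<beta> i"
      using closure_X0_agrees_on_finite[OF \<beta>, of "{m..m + 1 + int K}"] by auto
    have yA: "y \<in> domain True" by (rule R_in_domain[OF y(1)])
    define q where "q = iter (m + 1) y"
    have qA: "q \<in> domain True" unfolding q_def by (rule iter_int_in[OF fwd.bij yA])
    have "idx True ((T True ^^ k) p) = idx True ((T True ^^ k) q)" if "k \<le> K" for k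
      using m(2)[of "int k + (m + 1)"] y(2)[of "int k + (m + 1)"] that
      by (simp add: p_def q_def fwd.itinerary_forward xA yA)
    moreover have "\<exists>l\<in>{1..n-1}. bt l \<in> closed_segment p q"
    proof (rule bt_between_image_cells[OF pA qA])
      show "idx True (inv_into (domain True) (T True) p) \<noteq> idx True (inv_into (domain True) (T True) q)"
        using m(1) y(2)[of m] by (simp add: p_def q_def inv_T_iter xA yA fwd.itinerary_def)
    qed
    ultimately show "\<exists>q\<in>domain True. (\<exists>d\<in>bt ` {1..n-1}. d \<in> closed_segment p q) \<and>
                     (\<forall>k\<le>K. idx True ((T True ^^ k) p) = idx True ((T True ^^ k) q))"
      using qA by blast
  qed
  with aperiodic show False ..
qed

lemma X0_not_neg_asymptotic:
  assumes aperiodic: "\<not> has_periodic_point_in (T True) (domain True)"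
    and x: "x \<in> iet_R n a \<tau>" and \<beta>: "\<beta> \<in> iet_X n a \<tau>" and ne: "fwd.itinerary x \<noteq> \<beta>"
  shows "\<not> neg_asymptotic (fwd.itinerary x) \<beta>"
proof
  let ?g = "inv_into (domain True) (T True)"
  interpret inv: piecewise_translation "domain True" ?g "idx True \<circ> ?g" by (rule fwd.inverse_piecewise_translation)
  assume "neg_asymptotic (fwd.itinerary x) \<beta>"
  then obtain m where m: "fwd.itinerary x m \<noteq> \<beta> m" "\<And>i. i < m \<Longrightarrow> fwd.itinerary x i = \<beta> i"
    using ne by (auto elim: first_disagreement)
  have xA: "x \<in> domain True" by (rule R_in_domain[OF x])
  define p where "p = iter m x"
  have pA: "p \<in> domain True" unfolding p_def by (rule iter_int_in[OF fwd.bij xA])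
  have "has_periodic_point_in ?g (domain True)"
  proof (rule inv.periodic_point_of_separated_agreements[OF pA])
    show "finite (b ` {1..n-1})" by simp
    show "p \<notin> b ` {1..n-1}" using R_orbit_avoids_b[OF x] by (auto simp: p_def)
    fix K
    obtain y where y: "y \<in> iet_R n a \<tau>" "\<And>i. i \<in> {m - 1 - int K..m} \<Longrightarrow> fwd.itinerary y i = \<beta> i"
      using closure_X0_agrees_on_finite[OF \<beta>, of "{m - 1 - int K..m}"] by auto
    have yA: "y \<in> domain True" by (rule R_in_domain[OF y(1)])
    define q where "q = iter m y"
    have qA: "q \<in> domain True" unfolding q_def by (rule iter_int_in[OF fwd.bij yA])
    have "(idx True \<circ> ?g) ((?g ^^ k) p) = (idx True \<circ> ?g) ((?g ^^ k) q)" if "k \<le> K" for k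
      using m(2)[of "- int (Suc k) + m"] y(2)[of "- int (Suc k) + m"] that
        fwd.itinerary_backward[OF xA, of "Suc k" m] fwd.itinerary_backward[OF yA, of "Suc k" m]
      by (simp add: p_def q_def)
    moreover have "\<exists>l\<in>{1..n-1}. b l \<in> closed_segment p q"
    proof (rule b_between_cells[OF pA qA])
      show "idx True p \<noteq> idx True q"
        using m(1) y(2)[of m] by (simp add: p_def q_def fwd.itinerary_def)
    qed
    ultimately show "\<exists>q\<in>domain True. (\<exists>d\<in>b ` {1..n-1}. d \<in> closed_segment p q) \<and>
                     (\<forall>k\<le>K. (idx True \<circ> ?g) ((?g ^^ k) p) = (idx True \<circ> ?g) ((?g ^^ k) q))"
      using qA by blast
  qed
  with aperiodic has_periodic_point_inverse[OF fwd.bij] show False by blast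
qed

end

theorem theorem4p4:
  fixes n :: nat and a :: "nat \<Rightarrow> real" and \<tau> :: "nat \<Rightarrow> nat"
  assumes n2: "n \<ge> 2"
    and apos: "\<forall>i\<in>{1..n}. a i > 0"
    and asum: "(\<Sum>i=1..n. a i) = 1"
    and perm: "\<tau> permutes {1..n}"
    and noper: "\<not> has_periodic_point (iet_T n a \<tau>)"
  shows "(\<forall>x\<in>{0..<1}. \<forall>y\<in>{0..<1}. x \<noteq> y \<longrightarrow>
            \<not> pos_asymptotic (iet_itin n a \<tau> x) (iet_itin n a \<tau> y) \<and>
            \<not> neg_asymptotic (iet_itin n a \<tau> x) (iet_itin n a \<tau> y))
       \<and> (\<forall>x\<in>{0<..1}. \<forall>y\<in>{0<..1}. x \<noteq> y \<longrightarrow>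
            \<not> pos_asymptotic (iet_itind n a \<tau> x) (iet_itind n a \<tau> y) \<and>
            \<not> neg_asymptotic (iet_itind n a \<tau> x) (iet_itind n a \<tau> y))
       \<and> (\<forall>\<alpha>\<in>iet_X n a \<tau>. \<forall>\<beta>\<in>iet_X n a \<tau>. \<alpha> \<noteq> \<beta> \<longrightarrow> \<alpha> \<in> iet_X0 n a \<tau> \<longrightarrow>
            \<not> pos_asymptotic \<alpha> \<beta> \<and> \<not> neg_asymptotic \<alpha> \<beta>)
       \<and> inj_on (iet_itin n a \<tau>) {0..<1}
       \<and> inj_on (iet_itind n a \<tau>) {0<..1}"
proof -
  \<comment> \<open>n2 is unused: for n = 1 the map T is the identity, contradicting noper.\<close>
  interpret iet n a \<tau> using apos asum perm by unfold_locales
  have aperiodic: "\<not> has_periodic_point_in (T True) (domain True)"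
    using noper by (simp add: has_periodic_point_def has_periodic_point_in_def iet_T_eq domain_True)
  then have aperiodic_dual: "\<not> has_periodic_point_in (T False) (domain False)"
    using periodic_point_of_dual by blast
  have i: "\<forall>x\<in>{0..<1}. \<forall>y\<in>{0..<1}. x \<noteq> y \<longrightarrow>
            \<not> pos_asymptotic (iet_itin n a \<tau> x) (iet_itin n a \<tau> y) \<and>
            \<not> neg_asymptotic (iet_itin n a \<tau> x) (iet_itin n a \<tau> y)"
    using fwd.itineraries_not_pos_asymptotic[OF aperiodic]
      fwd.itineraries_not_neg_asymptotic[OF aperiodic]
    by (simp add: iet_itin_eq domain_True)
  have ii: "\<forall>x\<in>{0<..1}. \<forall>y\<in>{0<..1}. x \<noteq> y \<longrightarrow>
            \<not> pos_asymptotic (iet_itind n a \<tau> x) (iet_itind n a \<tau> y) \<and>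
            \<not> neg_asymptotic (iet_itind n a \<tau> x) (iet_itind n a \<tau> y)"
    using dual.itineraries_not_pos_asymptotic[OF aperiodic_dual]
      dual.itineraries_not_neg_asymptotic[OF aperiodic_dual]
    by (simp add: iet_itind_eq domain_False)
  have iii: "\<forall>\<alpha>\<in>iet_X n a \<tau>. \<forall>\<beta>\<in>iet_X n a \<tau>. \<alpha> \<noteq> \<beta> \<longrightarrow> \<alpha> \<in> iet_X0 n a \<tau> \<longrightarrow>
            \<not> pos_asymptotic \<alpha> \<beta> \<and> \<not> neg_asymptotic \<alpha> \<beta>"
    using X0_not_pos_asymptotic[OF aperiodic] X0_not_neg_asymptotic[OF aperiodic]
    unfolding iet_X0_def iet_itin_eq by blast
  have "inj_on (iet_itin n a \<tau>) {0..<1}" "inj_on (iet_itind n a \<tau>) {0<..1}"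
    using i ii pos_asymptotic_refl by (metis inj_onI)+
  with i ii iii show ?thesis by blast
qed

end
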